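(* An $L$-topological space $X$ is a strictly injective $T_0$ $L$-topological space if and only if $X$ is $L$-sober.
   Context: $L$ is a frame. An $L$-topology on $X$ is $\mathcal O(X)\subseteq L^X$ closed under finite meets and arbitrary joins containing all constant maps $a_X$; $f$ continuous if $f^\leftarrow(B)=B\circ f$ is open for all open $B$. $T_0$: $A(x)=A(y)$ for all open $A$ implies $x=y$. A map $f:Y\to Z$ is a quasihomeomorphism if $f^\leftarrow:\mathcal O(Z)\to\mathcal O(Y)$ is a bijection; a subspace embedding if it is injective and $\mathcal O(Y)=\{B\circ f:B\in\mathcal O(Z)\}$; a strict embedding if it is both. A $T_0$ space $X$ is strictly injective if for every strict embedding $j:Y\to Z$ between $T_0$ $L$-topological spaces and every continuous $f:Y\to X$ there is a continuous $g:Z\to X$ with $g\circ j=f$. A point of $\mathcal O(X)$ is $p:\mathcal O(X)\to L$ preserving binary meets and arbitrary joins with $p(\lambda_X)=\lambda$; $[x](A)=A(x)$; $X$ is $L$-sober if $x\mapsto[x]$ is a bijection from $X$ onto the set of points of $\mathcal O(X)$. *)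

theory Defs
  imports Main
begin

text \<open>L-topological spaces are represented by a carrier set X :: 'a set together with a
set OX of L-valued functions 'a => 'l.  Functions are kept extensional: they are bot
outside the carrier.\<close>

definition frame :: "'l::complete_lattice itself \<Rightarrow> bool" where
  "frame _ \<longleftrightarrow> (\<forall>(a::'l) S. inf a (Sup S) = Sup ((inf a) ` S))"

definition const_on :: "'a set \<Rightarrow> 'l::complete_lattice \<Rightarrow> 'a \<Rightarrow> 'l" where
  "const_on X a = (\<lambda>x. if x \<in> X then a else bot)"

definition is_Ltop :: "'a set \<Rightarrow> ('a \<Rightarrow> 'l::complete_lattice) set \<Rightarrow> bool" where
  "is_Ltop X OX \<longleftrightarrow>
     (\<forall>A\<in>OX. \<forall>x. x \<notin> X \<longrightarrow> A x = bot) \<and>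
     (\<forall>a. const_on X a \<in> OX) \<and>
     (\<forall>A\<in>OX. \<forall>B\<in>OX. inf A B \<in> OX) \<and>
     (\<forall>S. S \<subseteq> OX \<longrightarrow> Sup S \<in> OX)"

definition preimg :: "'b set \<Rightarrow> ('b \<Rightarrow> 'a) \<Rightarrow> ('a \<Rightarrow> 'l::complete_lattice) \<Rightarrow> 'b \<Rightarrow> 'l" where
  "preimg Y f B = (\<lambda>y. if y \<in> Y then B (f y) else bot)"

definition Lcontinuous ::
  "'b set \<Rightarrow> ('b \<Rightarrow> 'l::complete_lattice) set \<Rightarrow> 'a set \<Rightarrow> ('a \<Rightarrow> 'l) set \<Rightarrow> ('b \<Rightarrow> 'a) \<Rightarrow> bool" where
  "Lcontinuous Y OY X OX f \<longleftrightarrow> f ` Y \<subseteq> X \<and> (\<forall>B\<in>OX. preimg Y f B \<in> OY)"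

definition LT0 :: "'a set \<Rightarrow> ('a \<Rightarrow> 'l::complete_lattice) set \<Rightarrow> bool" where
  "LT0 X OX \<longleftrightarrow> (\<forall>x\<in>X. \<forall>y\<in>X. (\<forall>A\<in>OX. A x = A y) \<longrightarrow> x = y)"

definition quasihomeomorphism ::
  "'b set \<Rightarrow> ('b \<Rightarrow> 'l::complete_lattice) set \<Rightarrow> 'c set \<Rightarrow> ('c \<Rightarrow> 'l) set \<Rightarrow> ('b \<Rightarrow> 'c) \<Rightarrow> bool" where
  "quasihomeomorphism Y OY Z OZ j \<longleftrightarrow> j ` Y \<subseteq> Z \<and> bij_betw (preimg Y j) OZ OY"

definition subspace_embedding ::
  "'b set \<Rightarrow> ('b \<Rightarrow> 'l::complete_lattice) set \<Rightarrow> 'c set \<Rightarrow> ('c \<Rightarrow> 'l) set \<Rightarrow> ('b \<Rightarrow> 'c) \<Rightarrow> bool" where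
  "subspace_embedding Y OY Z OZ j \<longleftrightarrow> j ` Y \<subseteq> Z \<and> inj_on j Y \<and> OY = preimg Y j ` OZ"

definition strict_embedding ::
  "'b set \<Rightarrow> ('b \<Rightarrow> 'l::complete_lattice) set \<Rightarrow> 'c set \<Rightarrow> ('c \<Rightarrow> 'l) set \<Rightarrow> ('b \<Rightarrow> 'c) \<Rightarrow> bool" where
  "strict_embedding Y OY Z OZ j \<longleftrightarrow>
     quasihomeomorphism Y OY Z OZ j \<and> subspace_embedding Y OY Z OZ j"

text \<open>Strict injectivity, relative to the types 'b and 'c in which the test spaces Y and Z live.\<close>
definition strictly_injective ::
  "'b itself \<Rightarrow> 'c itself \<Rightarrow> 'a set \<Rightarrow> ('a \<Rightarrow> 'l::complete_lattice) set \<Rightarrow> bool" where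
  "strictly_injective _ _ X OX \<longleftrightarrow> LT0 X OX \<and>
     (\<forall>(Y::'b set) OY (Z::'c set) OZ j f.
        is_Ltop Y OY \<and> LT0 Y OY \<and> is_Ltop Z OZ \<and> LT0 Z OZ \<and>
        strict_embedding Y OY Z OZ j \<and> Lcontinuous Y OY X OX f \<longrightarrow>
        (\<exists>g. Lcontinuous Z OZ X OX g \<and> (\<forall>y\<in>Y. g (j y) = f y)))"

definition is_point :: "('a \<Rightarrow> 'l::complete_lattice) set \<Rightarrow> 'a set \<Rightarrow> (('a \<Rightarrow> 'l) \<Rightarrow> 'l) \<Rightarrow> bool" where
  "is_point OX X p \<longleftrightarrow>
     (\<forall>A\<in>OX. \<forall>B\<in>OX. p (inf A B) = inf (p A) (p B)) \<and>
     (\<forall>S. S \<subseteq> OX \<longrightarrow> p (Sup S) = Sup (p ` S)) \<and>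
     (\<forall>a. p (const_on X a) = a)"

definition points :: "'a set \<Rightarrow> ('a \<Rightarrow> 'l::complete_lattice) set \<Rightarrow> (('a \<Rightarrow> 'l) \<Rightarrow> 'l) set" where
  "points X OX = {p. is_point OX X p \<and> (\<forall>A. A \<notin> OX \<longrightarrow> p A = bot)}"

definition pt_of :: "('a \<Rightarrow> 'l::complete_lattice) set \<Rightarrow> 'a \<Rightarrow> ('a \<Rightarrow> 'l) \<Rightarrow> 'l" where
  "pt_of OX x = (\<lambda>A. if A \<in> OX then A x else bot)"

definition L_sober :: "'a set \<Rightarrow> ('a \<Rightarrow> 'l::complete_lattice) set \<Rightarrow> bool" where
  "L_sober X OX \<longleftrightarrow> bij_betw (pt_of OX) X (points X OX)"

end

theory Submission
  imports Defs
begin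

text \<open>
  For a strict embedding \<open>j : Y \<rightarrow> Z\<close>, the pullback \<open>j\<^sup>\<leftarrow>\<close> is an isomorphism
  \<open>O(Z) \<cong> O(Y)\<close> preserving meets, joins and constants, so for continuous \<open>f : Y \<rightarrow> X\<close> the map
  \<open>h = (j\<^sup>\<leftarrow>)\<^sup>-\<^sup>1 \<circ> f\<^sup>\<leftarrow> : O(X) \<rightarrow> O(Z)\<close> is again such a homomorphism. Evaluating \<open>h\<close> at
  \<open>z \<in> Z\<close> yields a point of \<open>O(X)\<close>; if \<open>X\<close> is sober it is \<open>[g z]\<close> for a unique \<open>g z \<in> X\<close>,
  and \<open>g\<close> is a continuous map with \<open>g\<^sup>\<leftarrow> = h\<close>, hence an extension of \<open>f\<close> (by \<open>T\<^sub>0\<close>).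

  Conversely, for \<open>T\<^sub>0\<close> \<open>X\<close> the map \<open>x \<mapsto> [x]\<close> is a strict embedding of \<open>X\<close> into the
  space of points of \<open>O(X)\<close>, whose opens are \<open>p \<mapsto> p(A)\<close>. Extending the identity of \<open>X\<close>
  along it gives a continuous retraction \<open>g\<close>; comparing \<open>g\<^sup>\<leftarrow>(A)\<close> with the open \<open>p \<mapsto> p(A)\<close>
  through the embedding shows \<open>[g p] = p\<close>, so every point is of the form \<open>[x]\<close>.
\<close>

lemma is_Ltop_vanishes: "is_Ltop X OX \<Longrightarrow> A \<in> OX \<Longrightarrow> x \<notin> X \<Longrightarrow> A x = bot"
  by (simp add: is_Ltop_def)

lemma is_Ltop_const: "is_Ltop X OX \<Longrightarrow> const_on X a \<in> OX"
  by (simp add: is_Ltop_def)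

lemma is_Ltop_inf: "is_Ltop X OX \<Longrightarrow> A \<in> OX \<Longrightarrow> B \<in> OX \<Longrightarrow> inf A B \<in> OX"
  by (simp add: is_Ltop_def)

lemma is_Ltop_Sup: "is_Ltop X OX \<Longrightarrow> S \<subseteq> OX \<Longrightarrow> Sup S \<in> OX"
  by (simp add: is_Ltop_def)

lemma preimg_inf: "preimg Y f (inf A B) = inf (preimg Y f A) (preimg Y f B)"
  by (auto simp: preimg_def fun_eq_iff)

lemma preimg_Sup: "preimg Y f (Sup S) = Sup (preimg Y f ` S)"
  by (auto simp: preimg_def fun_eq_iff image_image)

lemma preimg_const_on: "f ` Y \<subseteq> X \<Longrightarrow> preimg Y f (const_on X a) = const_on Y a"
  by (auto simp: preimg_def const_on_def fun_eq_iff)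

lemma preimg_preimg: "j ` Y \<subseteq> Z \<Longrightarrow> preimg Y j (preimg Z g B) = preimg Y (g \<circ> j) B"
  by (auto simp: preimg_def fun_eq_iff)

lemma preimg_ident_on:
  assumes "is_Ltop X OX" "B \<in> OX" "\<And>x. x \<in> X \<Longrightarrow> f x = x"
  shows "preimg X f B = B"
proof
  show "preimg X f B x = B x" for x
    using assms is_Ltop_vanishes[OF assms(1,2), of x] by (simp add: preimg_def)
qed

lemma LT0_iff_inj_on_pt_of: "LT0 X OX \<longleftrightarrow> inj_on (pt_of OX) X"
  by (auto simp: LT0_def inj_on_def pt_of_def fun_eq_iff)

lemma L_sober_imp_LT0: "L_sober X OX \<Longrightarrow> LT0 X OX"
  by (simp add: L_sober_def LT0_iff_inj_on_pt_of bij_betw_def)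

lemma LT0_eq_if_preimg_eq:
  assumes "LT0 X OX" "f ` Y \<subseteq> X" "g ` Y \<subseteq> X"
    and "\<And>B. B \<in> OX \<Longrightarrow> preimg Y f B = preimg Y g B" and "y \<in> Y"
  shows "f y = g y"
proof -
  have "B (f y) = B (g y)" if "B \<in> OX" for B
    using fun_cong[OF assms(4)[OF that], of y] assms(5) by (simp add: preimg_def)
  moreover have "f y \<in> X" "g y \<in> X"
    using assms(2,3,5) by auto
  ultimately show ?thesis
    using assms(1) by (simp add: LT0_def)
qed

lemma points_inf: "p \<in> points X OX \<Longrightarrow> A \<in> OX \<Longrightarrow> B \<in> OX \<Longrightarrow> p (inf A B) = inf (p A) (p B)"
  by (simp add: points_def is_point_def)

lemma points_Sup: "p \<in> points X OX \<Longrightarrow> S \<subseteq> OX \<Longrightarrow> p (Sup S) = Sup (p ` S)"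
  by (simp add: points_def is_point_def)

lemma points_const: "p \<in> points X OX \<Longrightarrow> p (const_on X a) = a"
  by (simp add: points_def is_point_def)

lemma points_not_open: "p \<in> points X OX \<Longrightarrow> A \<notin> OX \<Longrightarrow> p A = bot"
  by (simp add: points_def)

definition Lframe_hom ::
  "'a set \<Rightarrow> ('a \<Rightarrow> 'l::complete_lattice) set \<Rightarrow> 'b set \<Rightarrow> ('b \<Rightarrow> 'l) set \<Rightarrow> (('a \<Rightarrow> 'l) \<Rightarrow> 'b \<Rightarrow> 'l) \<Rightarrow> bool"
  where "Lframe_hom X OX Y OY h \<longleftrightarrow> h ` OX \<subseteq> OY \<and>
     (\<forall>A\<in>OX. \<forall>B\<in>OX. h (inf A B) = inf (h A) (h B)) \<and>
     (\<forall>S. S \<subseteq> OX \<longrightarrow> h (Sup S) = Sup (h ` S)) \<and>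
     (\<forall>a. h (const_on X a) = const_on Y a)"

lemma Lframe_homD:
  assumes "Lframe_hom X OX Y OY h"
  shows Lframe_hom_into: "A \<in> OX \<Longrightarrow> h A \<in> OY"
    and Lframe_hom_inf: "A \<in> OX \<Longrightarrow> B \<in> OX \<Longrightarrow> h (inf A B) = inf (h A) (h B)"
    and Lframe_hom_Sup: "S \<subseteq> OX \<Longrightarrow> h (Sup S) = Sup (h ` S)"
    and Lframe_hom_const: "h (const_on X a) = const_on Y a"
  using assms by (auto simp: Lframe_hom_def)

lemma Lframe_hom_id: "Lframe_hom X OX X OX (\<lambda>A. A)"
  by (simp add: Lframe_hom_def)

lemma Lframe_hom_comp:
  assumes h: "Lframe_hom X OX Y OY h" and k: "Lframe_hom Y OY Z OZ k"
  shows "Lframe_hom X OX Z OZ (k \<circ> h)"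
  unfolding Lframe_hom_def
proof (intro conjI ballI allI impI)
  show "(k \<circ> h) ` OX \<subseteq> OZ"
    using Lframe_hom_into[OF h] Lframe_hom_into[OF k] by auto
  show "(k \<circ> h) (inf A B) = inf ((k \<circ> h) A) ((k \<circ> h) B)" if "A \<in> OX" "B \<in> OX" for A B
    using that by (simp add: Lframe_hom_inf[OF h] Lframe_hom_inf[OF k] Lframe_hom_into[OF h])
  show "(k \<circ> h) (Sup S) = Sup ((k \<circ> h) ` S)" if "S \<subseteq> OX" for S
  proof -
    have "h ` S \<subseteq> OY"
      using that Lframe_hom_into[OF h] by auto
    then show ?thesis
      using that by (simp add: Lframe_hom_Sup[OF h] Lframe_hom_Sup[OF k] image_comp)
  qed
  show "(k \<circ> h) (const_on X a) = const_on Z a" for a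
    by (simp add: Lframe_hom_const[OF h] Lframe_hom_const[OF k])
qed

lemma Lcontinuous_Lframe_hom: "Lcontinuous Y OY X OX f \<Longrightarrow> Lframe_hom X OX Y OY (preimg Y f)"
  by (auto simp: Lcontinuous_def Lframe_hom_def preimg_inf preimg_Sup preimg_const_on)

lemma quasihomeomorphism_Lcontinuous:
  "quasihomeomorphism Y OY Z OZ j \<Longrightarrow> Lcontinuous Y OY Z OZ j"
  by (auto simp: quasihomeomorphism_def Lcontinuous_def bij_betw_def)

lemma Lframe_hom_inverse:
  assumes top: "is_Ltop X OX" and hom: "Lframe_hom X OX Y OY h" and bij: "bij_betw h OX OY"
  shows "Lframe_hom Y OY X OX (the_inv_into OX h)"
proof -
  let ?k = "the_inv_into OX h"
  have inj: "inj_on h OX" and onto: "h ` OX = OY"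
    using bij by (auto simp: bij_betw_def)
  have into: "?k u \<in> OX" if "u \<in> OY" for u
    using the_inv_into_into[OF inj _ order_refl] that onto by blast
  have hk: "h (?k u) = u" if "u \<in> OY" for u
    using f_the_inv_into_f[OF inj] that onto by blast
  have k_eqI: "?k u = A" if "A \<in> OX" "h A = u" for A u
    using the_inv_into_f_f[OF inj] that by blast
  show ?thesis
    unfolding Lframe_hom_def
  proof (intro conjI ballI allI impI subsetI)
    show "v \<in> OX" if "v \<in> ?k ` OY" for v
      using that into by blast
    show "?k (inf u v) = inf (?k u) (?k v)" if "u \<in> OY" "v \<in> OY" for u v
      using that by (intro k_eqI) (simp_all add: is_Ltop_inf[OF top] into hk Lframe_hom_inf[OF hom])
    show "?k (Sup T) = Sup (?k ` T)" if "T \<subseteq> OY" for T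
    proof (rule k_eqI)
      show "Sup (?k ` T) \<in> OX"
        using that into by (intro is_Ltop_Sup[OF top]) auto
      have "h ` ?k ` T = T"
        using that hk by (force simp: image_image)
      then show "h (Sup (?k ` T)) = Sup T"
        using that into by (subst Lframe_hom_Sup[OF hom]) auto
    qed
    show "?k (const_on Y a) = const_on X a" for a
      by (rule k_eqI) (simp_all add: is_Ltop_const[OF top] Lframe_hom_const[OF hom])
  qed
qed

lemma Lframe_hom_point:
  assumes top: "is_Ltop X OX" and hom: "Lframe_hom X OX Z OZ h" and z: "z \<in> Z"
  shows "(\<lambda>A. if A \<in> OX then h A z else bot) \<in> points X OX"
  unfolding points_def is_point_def
proof (intro CollectI conjI ballI allI impI)
  show "(if inf A B \<in> OX then h (inf A B) z else bot) =
        inf (if A \<in> OX then h A z else bot) (if B \<in> OX then h B z else bot)"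
    if "A \<in> OX" "B \<in> OX" for A B
    using that by (simp add: is_Ltop_inf[OF top] Lframe_hom_inf[OF hom])
  show "(if Sup S \<in> OX then h (Sup S) z else bot) = Sup ((\<lambda>A. if A \<in> OX then h A z else bot) ` S)"
    if "S \<subseteq> OX" for S
    using that by (auto simp: is_Ltop_Sup[OF top] Lframe_hom_Sup[OF hom] image_image
        intro!: arg_cong[where f = Sup] image_cong)
  show "(if const_on X a \<in> OX then h (const_on X a) z else bot) = a" for a
    using z by (simp add: is_Ltop_const[OF top] Lframe_hom_const[OF hom]) (simp add: const_on_def)
qed simp

lemma pt_of_in_points:
  assumes "is_Ltop X OX" "x \<in> X"
  shows "pt_of OX x \<in> points X OX"
  using Lframe_hom_point[OF assms(1) Lframe_hom_id assms(2)]
  by (simp add: pt_of_def)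

lemma is_Ltop_image_Lframe_hom:
  assumes top: "is_Ltop X OX" and hom: "Lframe_hom X OX Z (h ` OX) h"
    and vanishes: "\<And>A z. A \<in> OX \<Longrightarrow> z \<notin> Z \<Longrightarrow> h A z = bot"
  shows "is_Ltop Z (h ` OX)"
  unfolding is_Ltop_def
proof (intro conjI ballI allI impI)
  show "const_on Z a \<in> h ` OX" for a
    using is_Ltop_const[OF top] Lframe_hom_const[OF hom] by (metis image_eqI)
  show "inf U V \<in> h ` OX" if UV: "U \<in> h ` OX" "V \<in> h ` OX" for U V
  proof -
    obtain A B where "A \<in> OX" "B \<in> OX" "U = h A" "V = h B"
      using UV by blast
    then show ?thesis
      using is_Ltop_inf[OF top] Lframe_hom_inf[OF hom] by (metis image_eqI)
  qed
  show "Sup S \<in> h ` OX" if S: "S \<subseteq> h ` OX" for S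
  proof
    let ?S' = "{A \<in> OX. h A \<in> S}"
    show "Sup ?S' \<in> OX"
      by (intro is_Ltop_Sup[OF top]) auto
    have "h ` ?S' = S"
      using S by blast
    then show "Sup S = h (Sup ?S')"
      by (simp add: Lframe_hom_Sup[OF hom])
  qed
qed (use vanishes in auto)

lemma L_sober_realises_Lframe_hom:
  assumes topX: "is_Ltop X OX" and topZ: "is_Ltop Z OZ" and sober: "L_sober X OX"
    and hom: "Lframe_hom X OX Z OZ h"
  obtains g where "Lcontinuous Z OZ X OX g" and "\<And>B. B \<in> OX \<Longrightarrow> preimg Z g B = h B"
proof
  have inj: "inj_on (pt_of OX) X" and onto: "pt_of OX ` X = points X OX"
    using sober by (auto simp: L_sober_def bij_betw_def)
  define g where "g z = the_inv_into X (pt_of OX) (\<lambda>A. if A \<in> OX then h A z else bot)" for z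
  have gX: "g z \<in> X" and pt_g: "pt_of OX (g z) = (\<lambda>A. if A \<in> OX then h A z else bot)"
    if "z \<in> Z" for z
    using Lframe_hom_point[OF topX hom that] unfolding g_def onto[symmetric]
    by (simp_all add: the_inv_into_into[OF inj] f_the_inv_into_f[OF inj])
  show preimg_g: "preimg Z g B = h B" if B: "B \<in> OX" for B
  proof
    fix z
    show "preimg Z g B z = h B z"
    proof (cases "z \<in> Z")
      case True
      then have "B (g z) = h B z"
        using fun_cong[OF pt_g[OF True], of B] B by (simp add: pt_of_def)
      then show ?thesis
        using True by (simp add: preimg_def)
    next
      case False
      then show ?thesis
        using is_Ltop_vanishes[OF topZ Lframe_hom_into[OF hom B]] by (simp add: preimg_def)
    qed
  qed
  show "Lcontinuous Z OZ X OX g"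
    using gX preimg_g Lframe_hom_into[OF hom] by (auto simp: Lcontinuous_def)
qed

lemma L_sober_imp_strictly_injective:
  assumes topX: "is_Ltop X OX" and sober: "L_sober X OX"
  shows "strictly_injective TYPE('b) TYPE('c) X OX"
  unfolding strictly_injective_def
proof (intro conjI allI impI)
  show T0: "LT0 X OX"
    using sober by (rule L_sober_imp_LT0)
  fix Y :: "'b set" and OY and Z :: "'c set" and OZ j and f
  assume "is_Ltop Y OY \<and> LT0 Y OY \<and> is_Ltop Z OZ \<and> LT0 Z OZ \<and>
    strict_embedding Y OY Z OZ j \<and> Lcontinuous Y OY X OX f"
  then have topZ: "is_Ltop Z OZ" and qh: "quasihomeomorphism Y OY Z OZ j"
    and f: "Lcontinuous Y OY X OX f"
    by (auto simp: strict_embedding_def)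
  have jZ: "j ` Y \<subseteq> Z" and bij: "bij_betw (preimg Y j) OZ OY"
    using qh by (auto simp: quasihomeomorphism_def)
  define \<psi> where "\<psi> = the_inv_into OZ (preimg Y j)"
  have \<psi>: "Lframe_hom Y OY Z OZ \<psi>"
    unfolding \<psi>_def
    using Lframe_hom_inverse[OF topZ Lcontinuous_Lframe_hom[OF quasihomeomorphism_Lcontinuous[OF qh]] bij] .
  obtain g where g: "Lcontinuous Z OZ X OX g"
    and preimg_g: "\<And>B. B \<in> OX \<Longrightarrow> preimg Z g B = (\<psi> \<circ> preimg Y f) B"
    using L_sober_realises_Lframe_hom[OF topX topZ sober
        Lframe_hom_comp[OF Lcontinuous_Lframe_hom[OF f] \<psi>]] by blast
  have preimg_gj: "preimg Y (g \<circ> j) B = preimg Y f B" if B: "B \<in> OX" for B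
  proof -
    have "preimg Y (g \<circ> j) B = preimg Y j (preimg Z g B)"
      using jZ by (simp add: preimg_preimg)
    also have "\<dots> = preimg Y j (\<psi> (preimg Y f B))"
      using B by (simp add: preimg_g)
    also have "\<dots> = preimg Y f B"
      using B f by (simp add: \<psi>_def Lcontinuous_def f_the_inv_into_f_bij_betw[OF bij])
    finally show ?thesis .
  qed
  have into_X: "(g \<circ> j) ` Y \<subseteq> X" "f ` Y \<subseteq> X"
    using g f jZ by (auto simp: Lcontinuous_def)
  have "g (j y) = f y" if "y \<in> Y" for y
    using LT0_eq_if_preimg_eq[OF T0 into_X preimg_gj that] by simp
  with g show "\<exists>g. Lcontinuous Z OZ X OX g \<and> (\<forall>y\<in>Y. g (j y) = f y)"
    by blast
qed

definition spec_open :: "'a set \<Rightarrow> ('a \<Rightarrow> 'l::complete_lattice) set \<Rightarrow> ('a \<Rightarrow> 'l) \<Rightarrow> (('a \<Rightarrow> 'l) \<Rightarrow> 'l) \<Rightarrow> 'l"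
  where "spec_open X OX A = (\<lambda>p. if p \<in> points X OX then p A else bot)"

lemma Lframe_hom_spec_open: "Lframe_hom X OX (points X OX) (spec_open X OX ` OX) (spec_open X OX)"
  by (auto simp: Lframe_hom_def spec_open_def fun_eq_iff points_inf points_Sup
      points_const[unfolded const_on_def] const_on_def image_image
      intro!: arg_cong[where f = Sup] image_cong)

lemma is_Ltop_spectrum: "is_Ltop X OX \<Longrightarrow> is_Ltop (points X OX) (spec_open X OX ` OX)"
  by (rule is_Ltop_image_Lframe_hom[OF _ Lframe_hom_spec_open]) (simp_all add: spec_open_def)

lemma LT0_spectrum: "LT0 (points X OX) (spec_open X OX ` OX)"
  unfolding LT0_def
proof (intro ballI impI ext)
  fix p q A
  assume p: "p \<in> points X OX" and q: "q \<in> points X OX"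
    and eq: "\<forall>U\<in>spec_open X OX ` OX. U p = U q"
  show "p A = q A"
  proof (cases "A \<in> OX")
    case True
    then show ?thesis
      using eq p q by (auto simp: spec_open_def)
  next
    case False
    then show ?thesis
      using points_not_open[OF p False] points_not_open[OF q False] by simp
  qed
qed

lemma preimg_pt_of_spec_open:
  assumes top: "is_Ltop X OX" and A: "A \<in> OX"
  shows "preimg X (pt_of OX) (spec_open X OX A) = A"
proof
  show "preimg X (pt_of OX) (spec_open X OX A) x = A x" for x
    using is_Ltop_vanishes[OF top A, of x] pt_of_in_points[OF top, of x] A
    by (simp add: preimg_def spec_open_def pt_of_def)
qed

lemma strict_embedding_pt_of:
  assumes top: "is_Ltop X OX" and T0: "LT0 X OX"
  shows "strict_embedding X OX (points X OX) (spec_open X OX ` OX) (pt_of OX)"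
proof -
  have "pt_of OX ` X \<subseteq> points X OX"
    using pt_of_in_points[OF top] by blast
  moreover have "bij_betw (preimg X (pt_of OX)) (spec_open X OX ` OX) OX"
    using preimg_pt_of_spec_open[OF top]
    by (intro bij_betw_byWitness[where f' = "spec_open X OX"]) auto
  ultimately show ?thesis
    using T0 by (auto simp: strict_embedding_def quasihomeomorphism_def subspace_embedding_def
        LT0_iff_inj_on_pt_of bij_betw_def)
qed

lemma pt_of_retraction:
  assumes top: "is_Ltop X OX"
    and g: "Lcontinuous (points X OX) (spec_open X OX ` OX) X OX g"
    and retract: "\<And>x. x \<in> X \<Longrightarrow> g (pt_of OX x) = x"
    and p: "p \<in> points X OX"
  shows "pt_of OX (g p) = p"
proof
  fix A
  show "pt_of OX (g p) A = p A"
  proof (cases "A \<in> OX")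
    case True
    then obtain B where B: "B \<in> OX" "preimg (points X OX) g A = spec_open X OX B"
      using g by (auto simp: Lcontinuous_def)
    have "A = B"
    proof -
      have "A = preimg X (g \<circ> pt_of OX) A"
        using True retract by (simp add: preimg_ident_on[OF top])
      also have "\<dots> = preimg X (pt_of OX) (preimg (points X OX) g A)"
        using pt_of_in_points[OF top] by (simp add: preimg_preimg image_subset_iff)
      also have "\<dots> = preimg X (pt_of OX) (spec_open X OX B)"
        by (simp add: B(2))
      also have "\<dots> = B"
        using B(1) by (rule preimg_pt_of_spec_open[OF top])
      finally show ?thesis .
    qed
    then have "A (g p) = p A"
      using fun_cong[OF B(2), of p] p by (simp add: preimg_def spec_open_def)
    then show ?thesis
      using True by (simp add: pt_of_def)
  next
    case False
    then show ?thesis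
      using points_not_open[OF p False] by (simp add: pt_of_def)
  qed
qed

lemma strictly_injective_imp_L_sober:
  fixes X :: "'a set" and OX :: "('a \<Rightarrow> 'l::complete_lattice) set"
  assumes top: "is_Ltop X OX"
    and inj: "strictly_injective TYPE('a) TYPE(('a \<Rightarrow> 'l) \<Rightarrow> 'l) X OX"
  shows "L_sober X OX"
proof -
  have T0: "LT0 X OX"
    using inj by (simp add: strictly_injective_def)
  have "Lcontinuous X OX X OX (\<lambda>x. x)"
    using preimg_ident_on[OF top] by (auto simp: Lcontinuous_def)
  then have "\<exists>g. Lcontinuous (points X OX) (spec_open X OX ` OX) X OX g \<and>
      (\<forall>x\<in>X. g (pt_of OX x) = x)"
    using inj[unfolded strictly_injective_def, THEN conjunct2, rule_format,
        of X OX "points X OX" "spec_open X OX ` OX" "pt_of OX" "\<lambda>x. x"]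
      top T0 is_Ltop_spectrum[OF top] strict_embedding_pt_of[OF top T0]
    by (simp add: LT0_spectrum)
  then obtain g where g: "Lcontinuous (points X OX) (spec_open X OX ` OX) X OX g"
    and retract: "\<And>x. x \<in> X \<Longrightarrow> g (pt_of OX x) = x"
    by blast
  have "points X OX \<subseteq> pt_of OX ` X"
  proof
    fix p
    assume p: "p \<in> points X OX"
    then have "g p \<in> X"
      using g by (auto simp: Lcontinuous_def)
    with pt_of_retraction[OF top g retract p] show "p \<in> pt_of OX ` X"
      by (metis image_eqI)
  qed
  with T0 pt_of_in_points[OF top] show ?thesis
    by (auto simp: L_sober_def bij_betw_def LT0_iff_inj_on_pt_of)
qed

theorem theorem3p12:
  fixes X :: "'a set" and OX :: "('a \<Rightarrow> 'l::complete_lattice) set"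
  assumes "frame TYPE('l)" and "is_Ltop X OX"
  shows "(L_sober X OX \<longrightarrow> strictly_injective TYPE('b) TYPE('c) X OX) \<and>
         (strictly_injective TYPE('a) TYPE(('a \<Rightarrow> 'l) \<Rightarrow> 'l) X OX \<longrightarrow> L_sober X OX)"
  using L_sober_imp_strictly_injective[OF assms(2)] strictly_injective_imp_L_sober[OF assms(2)]
  by blast

end
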